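(* Let $X_1,\dots,X_n$ ($n\ge 1$) and $Y$ be jointly distributed discrete random variables with $I(\mathbf X;Y)>0$, where $\mathbf X=(X_1,\dots,X_n)$, and let $\Pi$ be any partial information decomposition (as defined in the context). Then $$\mathrm{RSI}(\mathbf X;Y)=(\bar r-1)\,I(\mathbf X;Y).$$
   Context: Notation: $[n]=\{1,\dots,n\}$. For $\mathbf a\subseteq[n]$, $X_{\mathbf a}=(X_i)_{i\in\mathbf a}$. Antichains: $\mathcal A_n$ is the set of all nonempty collections $\alpha$ of nonempty subsets of $[n]$ such that no element of $\alpha$ is a proper subset of another element of $\alpha$. Partial information decomposition (PID): any function $\Pi:\mathcal A_n\to\mathbb R$ satisfying, for every nonempty $\mathbf a\subseteq[n]$, $$I(X_{\mathbf a};Y)=\sum_{\alpha\in\mathcal A_n:\ \exists \mathbf b\in\alpha,\ \mathbf b\subseteq \mathbf a}\Pi(\alpha).$$ Degree of redundancy: $r(\alpha)=|\{i\in[n]: \{i\}\in\alpha\}|$. Average degree of redundancy: $\bar r=\sum_{k=0}^n k\sum_{\alpha:\ r(\alpha)=k}\Pi(\alpha)/I(\mathbf X;Y)$. Redundancy-synergy index: $\mathrm{RSI}(\mathbf X;Y)=\sum_{i=1}^n I(X_i;Y)-I(\mathbf X;Y)$. *)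

theory Defs
  imports "HOL-Probability.Probability"
begin

definition MI :: "'o measure \<Rightarrow> real \<Rightarrow> ('o \<Rightarrow> 'x) \<Rightarrow> ('o \<Rightarrow> 'y) \<Rightarrow> real" where
  "MI M b X Y = prob_space.mutual_information M b (count_space (X ` space M)) (count_space (Y ` space M)) X Y"

definition subvec :: "(nat \<Rightarrow> 'o \<Rightarrow> 'a) \<Rightarrow> nat set \<Rightarrow> 'o \<Rightarrow> (nat \<Rightarrow> 'a)" where
  "subvec X a = (\<lambda>\<omega>. restrict (\<lambda>i. X i \<omega>) a)"

definition antichains :: "nat \<Rightarrow> nat set set set" where
  "antichains n = {\<alpha>. \<alpha> \<noteq> {} \<and> (\<forall>b\<in>\<alpha>. b \<noteq> {} \<and> b \<subseteq> {1..n}) \<and>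
                        (\<forall>b\<in>\<alpha>. \<forall>c\<in>\<alpha>. \<not> b \<subset> c)}"

definition is_PID :: "'o measure \<Rightarrow> real \<Rightarrow> nat \<Rightarrow> (nat \<Rightarrow> 'o \<Rightarrow> 'a) \<Rightarrow> ('o \<Rightarrow> 'y)
                      \<Rightarrow> (nat set set \<Rightarrow> real) \<Rightarrow> bool" where
  "is_PID M b n X Y PI \<longleftrightarrow>
     (\<forall>a. a \<noteq> {} \<and> a \<subseteq> {1..n} \<longrightarrow>
        MI M b (subvec X a) Y = (\<Sum>\<alpha>\<in>{\<alpha>\<in>antichains n. \<exists>c\<in>\<alpha>. c \<subseteq> a}. PI \<alpha>))"

definition red_degree :: "nat \<Rightarrow> nat set set \<Rightarrow> nat" where
  "red_degree n \<alpha> = card {i\<in>{1..n}. {i} \<in> \<alpha>}"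

definition avg_red_degree :: "'o measure \<Rightarrow> real \<Rightarrow> nat \<Rightarrow> (nat \<Rightarrow> 'o \<Rightarrow> 'a) \<Rightarrow> ('o \<Rightarrow> 'y)
                      \<Rightarrow> (nat set set \<Rightarrow> real) \<Rightarrow> real" where
  "avg_red_degree M b n X Y PI =
     (\<Sum>k=0..n. real k * (\<Sum>\<alpha>\<in>{\<alpha>\<in>antichains n. red_degree n \<alpha> = k}. PI \<alpha>))
       / MI M b (subvec X {1..n}) Y"

definition RSI :: "'o measure \<Rightarrow> real \<Rightarrow> nat \<Rightarrow> (nat \<Rightarrow> 'o \<Rightarrow> 'a) \<Rightarrow> ('o \<Rightarrow> 'y) \<Rightarrow> real" where
  "RSI M b n X Y = (\<Sum>i=1..n. MI M b (X i) Y) - MI M b (subvec X {1..n}) Y"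

end

theory Submission
  imports Defs
begin

text \<open>An atom \<open>\<Pi>(\<alpha>)\<close> contributes to \<open>I(X\<^sub>a;Y)\<close> exactly when some block of \<open>\<alpha>\<close> lies
  inside \<open>a\<close>. Hence \<open>I(\<^bold>X;Y)\<close> is the sum of all atoms, and for \<open>a = {i}\<close> an antichain
  contributes exactly when \<open>{i} \<in> \<alpha>\<close>. Summing \<open>I(X\<^sub>i;Y)\<close> over \<open>i\<close> therefore counts each
  atom \<open>r(\<alpha>)\<close> times, which is the average degree of redundancy times \<open>I(\<^bold>X;Y)\<close>.
  The only information-theoretic input is that the one-coordinate sub-vector \<open>X\<^bsub>{i}\<^esub>\<close>
  carries the same information about \<open>Y\<close> as \<open>X\<^sub>i\<close>, since mutual information
  \<open>H(X) + H(Y) - H(X,Y)\<close> is invariant under injective relabelling of \<open>X\<close>.\<close>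

lemma (in information_space) mutual_information_eq_entropies:
  assumes X: "simple_function M X" and Y: "simple_function M Y"
  shows "\<I>(X ; Y) = \<H>(X) + \<H>(Y) - \<H>(\<lambda>x. (X x, Y x))"
proof -
  have swap: "(\<lambda>x. (Y x, X x)) = prod.swap \<circ> (\<lambda>x. (X x, Y x))"
    by (simp add: comp_def)
  have "\<H>(\<lambda>x. (X x, Y x)) = \<H>(\<lambda>x. (Y x, X x))"
    unfolding swap by (rule entropy_of_inj[symmetric]) (auto intro: simple_function_Pair X Y)
  also have "\<dots> = \<H>(Y) + \<H>(X | Y)"
    using Y X by (rule entropy_chain_rule)
  finally show ?thesis
    using mutual_information_eq_entropy_conditional_entropy[OF X Y] by simp
qed

lemma (in information_space) mutual_information_comp_inj:
  assumes X: "simple_function M X" and Y: "simple_function M Y"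
    and inj: "inj_on f (X ` space M)"
  shows "\<I>(f \<circ> X ; Y) = \<I>(X ; Y)"
proof -
  have fX: "simple_function M (f \<circ> X)"
    using X by (rule simple_function_compose)
  have pair: "(\<lambda>x. ((f \<circ> X) x, Y x)) = map_prod f id \<circ> (\<lambda>x. (X x, Y x))"
    by (simp add: comp_def)
  have "inj_on (map_prod f id) ((\<lambda>x. (X x, Y x)) ` space M)"
    using inj by (auto simp: inj_on_def)
  then have "\<H>(\<lambda>x. ((f \<circ> X) x, Y x)) = \<H>(\<lambda>x. (X x, Y x))"
    unfolding pair by (intro entropy_of_inj simple_function_Pair X Y)
  moreover have "\<H>(f \<circ> X) = \<H>(X)"
    using X inj by (rule entropy_of_inj)
  ultimately show ?thesis
    unfolding mutual_information_eq_entropies[OF fX Y] mutual_information_eq_entropies[OF X Y]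
    by simp
qed

lemma MI_subvec_singleton:
  assumes "information_space M b" "simple_function M (X i)" "simple_function M Y"
  shows "MI M b (subvec X {i}) Y = MI M b (X i) Y"
proof -
  interpret information_space M b by fact
  have "subvec X {i} = (\<lambda>x. restrict (\<lambda>j. x) {i}) \<circ> X i"
    by (auto simp: subvec_def restrict_def fun_eq_iff)
  moreover have "inj_on (\<lambda>x. restrict (\<lambda>j. x) {i}) (X i ` space M)"
    by (auto simp: inj_on_def restrict_def fun_eq_iff)
  ultimately show ?thesis
    unfolding MI_def using mutual_information_comp_inj[OF assms(2,3)] by simp
qed

lemma finite_antichains: "finite (antichains n)"
proof (rule finite_subset)
  show "antichains n \<subseteq> Pow (Pow {1..n})"
    by (auto simp: antichains_def)
qed simp

lemma red_degree_le: "red_degree n \<alpha> \<le> n"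
proof -
  have "red_degree n \<alpha> \<le> card {1..n}"
    unfolding red_degree_def by (rule card_mono) auto
  then show ?thesis by simp
qed

lemma antichains_below_singleton:
  "{\<alpha> \<in> antichains n. \<exists>c\<in>\<alpha>. c \<subseteq> {i}} = {\<alpha> \<in> antichains n. {i} \<in> \<alpha>}"
  by (auto simp: antichains_def subset_singleton_iff)

lemma is_PID_full:
  assumes "is_PID M b n X Y PI" "n \<ge> 1"
  shows "MI M b (subvec X {1..n}) Y = (\<Sum>\<alpha>\<in>antichains n. PI \<alpha>)"
proof -
  have "{\<alpha> \<in> antichains n. \<exists>c\<in>\<alpha>. c \<subseteq> {1..n}} = antichains n"
    by (auto simp: antichains_def)
  moreover have "{1..n} \<noteq> {}"
    using assms(2) by simp
  ultimately show ?thesis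
    using assms(1) unfolding is_PID_def by simp
qed

lemma is_PID_singleton:
  assumes "is_PID M b n X Y PI" "i \<in> {1..n}"
  shows "MI M b (subvec X {i}) Y = (\<Sum>\<alpha> | \<alpha> \<in> antichains n \<and> {i} \<in> \<alpha>. PI \<alpha>)"
  using assms antichains_below_singleton[of n i] unfolding is_PID_def by auto

lemma sum_singleton_atoms_eq_red_degree:
  fixes f :: "nat set set \<Rightarrow> real"
  assumes "finite A"
  shows "(\<Sum>i=1..n. \<Sum>\<alpha> | \<alpha> \<in> A \<and> {i} \<in> \<alpha>. f \<alpha>) = (\<Sum>\<alpha>\<in>A. real (red_degree n \<alpha>) * f \<alpha>)"
proof -
  have "(\<Sum>i=1..n. \<Sum>\<alpha> | \<alpha> \<in> A \<and> {i} \<in> \<alpha>. f \<alpha>) = (\<Sum>i=1..n. \<Sum>\<alpha>\<in>A. if {i} \<in> \<alpha> then f \<alpha> else 0)"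
    using assms by (simp add: sum.inter_filter)
  also have "\<dots> = (\<Sum>\<alpha>\<in>A. \<Sum>i=1..n. if {i} \<in> \<alpha> then f \<alpha> else 0)"
    by (rule sum.swap)
  also have "\<dots> = (\<Sum>\<alpha>\<in>A. real (red_degree n \<alpha>) * f \<alpha>)"
    by (simp add: red_degree_def sum.If_cases Int_def)
  finally show ?thesis .
qed

lemma sum_grouped_by_red_degree:
  fixes f :: "nat set set \<Rightarrow> real"
  assumes "finite A"
  shows "(\<Sum>k=0..n. real k * (\<Sum>\<alpha> | \<alpha> \<in> A \<and> red_degree n \<alpha> = k. f \<alpha>))
           = (\<Sum>\<alpha>\<in>A. real (red_degree n \<alpha>) * f \<alpha>)"
proof -
  have "(\<Sum>k=0..n. real k * (\<Sum>\<alpha> | \<alpha> \<in> A \<and> red_degree n \<alpha> = k. f \<alpha>))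
      = (\<Sum>k=0..n. \<Sum>\<alpha> | \<alpha> \<in> A \<and> red_degree n \<alpha> = k. real (red_degree n \<alpha>) * f \<alpha>)"
    by (simp add: sum_distrib_left)
  also have "\<dots> = (\<Sum>\<alpha>\<in>A. real (red_degree n \<alpha>) * f \<alpha>)"
    by (rule sum.group) (auto simp: assms red_degree_le)
  finally show ?thesis .
qed

theorem corollary1:
  fixes M :: "'o measure" and b :: real and n :: nat
    and X :: "nat \<Rightarrow> 'o \<Rightarrow> 'a" and Y :: "'o \<Rightarrow> 'y" and PI :: "nat set set \<Rightarrow> real"
  assumes "information_space M b"
    and "n \<ge> 1"
    and "\<And>i. i \<in> {1..n} \<Longrightarrow> simple_function M (X i)"
    and "simple_function M Y"
    and "MI M b (subvec X {1..n}) Y > 0"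
    and "is_PID M b n X Y PI"
  shows "RSI M b n X Y = (avg_red_degree M b n X Y PI - 1) * MI M b (subvec X {1..n}) Y"
proof -
  let ?I = "MI M b (subvec X {1..n}) Y"
  let ?R = "\<Sum>\<alpha>\<in>antichains n. real (red_degree n \<alpha>) * PI \<alpha>"
  have "(\<Sum>i=1..n. MI M b (X i) Y) = (\<Sum>i=1..n. \<Sum>\<alpha> | \<alpha> \<in> antichains n \<and> {i} \<in> \<alpha>. PI \<alpha>)"
    using assms(1,3,4,6) by (simp add: MI_subvec_singleton[symmetric] is_PID_singleton)
  also have "\<dots> = ?R"
    by (rule sum_singleton_atoms_eq_red_degree[OF finite_antichains])
  finally have singles: "(\<Sum>i=1..n. MI M b (X i) Y) = ?R" .
  have "avg_red_degree M b n X Y PI = ?R / ?I"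
    unfolding avg_red_degree_def by (simp add: sum_grouped_by_red_degree[OF finite_antichains])
  then have "avg_red_degree M b n X Y PI * ?I = ?R"
    using assms(5) by simp
  then show ?thesis
    unfolding RSI_def singles using is_PID_full[OF assms(6,2)] by (simp add: algebra_simps)
qed

end
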